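(* There exists a measure-preserving transformation $T:[0,1]\to[0,1]$, generated by a network with task-driven neurons, and a point $\xi\in[0,1]$ such that the orbit $\{T^n(\xi): n\in\mathbb{N}\}$ is dense in $[0,1]$. Equivalently, for every $x\in[0,1]$ and every $\epsilon>0$ there exists $m\in\mathbb{N}$ with \[ |x - T^{m}(\xi)| < \epsilon . \]
   Context: $T^m$ denotes the $m$-fold composition of $T$ with itself. A task-driven neuron with input $\mathbf{z}\in\mathbb{R}^d$ computes $y=\sigma(g(\mathbf{z}))$, where $\sigma$ is a common activation function (e.g. ReLU) and the aggregation function $g$ replaces the usual inner product $\mathbf{w}^\top\mathbf{z}+b$ by a nonlinear expression with learnable coefficients built from polynomial terms $\mathbf{w}_k^\top \mathbf{z}^{\odot k}$ (element-wise powers), interaction terms $\sum_{r=1}^R\prod_{j=1}^m(\mathbf{a}_{r,j}^\top\mathbf{z})$, and possibly a periodic term $D\sin(\mathbf{z})$, plus a bias; in particular a neuron may have a polynomial of any order as its aggregation function. A network with task-driven neurons is a feedforward network built from such neurons. Measure-preserving is with respect to Lebesgue measure on $[0,1]$. *)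

theory Defs
  imports "HOL-Analysis.Analysis"
begin

text \<open>Inner product of coefficient list and input list; missing coefficients count as 0.\<close>
definition lin :: "real list \<Rightarrow> real list \<Rightarrow> real" where
  "lin w z = sum_list (map2 (*) w z)"

text \<open>A task-driven neuron: polynomial coefficient vectors w_1..w_K (w_k multiplies the
  element-wise k-th power of the input), interaction terms (a list of R products, each a list
  of m linear forms a_{r,j}), a periodic coefficient vector D and a bias b.\<close>
datatype neuron = Neuron "real list list" "real list list list" "real list" real

fun agg :: "neuron \<Rightarrow> real list \<Rightarrow> real" where
  "agg (Neuron W A D b) z =
     (\<Sum>k<length W. lin (W ! k) (map (\<lambda>t. t ^ (Suc k)) z))
     + sum_list (map (\<lambda>row. prod_list (map (\<lambda>a. lin a z) row)) A)
     + lin D (map sin z) + b"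

definition relu :: "real \<Rightarrow> real" where
  "relu t = max 0 t"

definition neuron_out :: "(real \<Rightarrow> real) \<Rightarrow> neuron \<Rightarrow> real list \<Rightarrow> real" where
  "neuron_out \<sigma> n z = \<sigma> (agg n z)"

definition layer_out :: "(real \<Rightarrow> real) \<Rightarrow> neuron list \<Rightarrow> real list \<Rightarrow> real list" where
  "layer_out \<sigma> L z = map (\<lambda>n. neuron_out \<sigma> n z) L"

definition net_out :: "(real \<Rightarrow> real) \<Rightarrow> neuron list list \<Rightarrow> real list \<Rightarrow> real list" where
  "net_out \<sigma> Ls z = fold (layer_out \<sigma>) Ls z"

definition generated_by_task_net :: "(real \<Rightarrow> real) \<Rightarrow> real set \<Rightarrow> (real \<Rightarrow> real) \<Rightarrow> bool" where
  "generated_by_task_net \<sigma> S T \<longleftrightarrow>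
     (\<exists>Ls. Ls \<noteq> [] \<and> length (last Ls) = 1 \<and> (\<forall>x\<in>S. T x = hd (net_out \<sigma> Ls [x])))"

definition unit_leb :: "real measure" where
  "unit_leb = restrict_space lborel {0..1}"

definition measure_preserving_on :: "real measure \<Rightarrow> (real \<Rightarrow> real) \<Rightarrow> bool" where
  "measure_preserving_on M T \<longleftrightarrow>
     T \<in> measurable M M \<and> (\<forall>A\<in>sets M. emeasure M (T -` A \<inter> space M) = emeasure M A)"

end

theory Submission
  imports Defs
begin

text \<open>The tent map \<open>min (2x) (2 - 2x)\<close> is computed on \<open>[0,1]\<close> by a two-layer ReLU network.
  It preserves Lebesgue measure because every set in \<open>[0,1]\<close> has two affine preimage branches
  of slope \<open>\<plusminus>2\<close>, each carrying half of its measure. Its \<open>n\<close>-th iterate maps every dyadic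
  interval of length \<open>2\<^sup>-\<^sup>n\<close> onto \<open>[0,1]\<close>, so the tent map is topologically transitive, and
  Birkhoff's transitivity theorem (a Baire category argument) provides a point with dense orbit.\<close>

lemma continuous_on_funpow:
  assumes "continuous_on S f" "f ` S \<subseteq> S"
  shows "continuous_on S (f ^^ n)"
proof (induction n)
  case 0
  then show ?case by (simp add: continuous_on_id)
next
  case (Suc n)
  then have "continuous_on (f ` S) (f ^^ n)"
    using assms(2) continuous_on_subset by blast
  then show ?case
    unfolding funpow_Suc_right by (rule continuous_on_compose[OF assms(1)])
qed

definition topologically_transitive_on :: "'a::topological_space set \<Rightarrow> ('a \<Rightarrow> 'a) \<Rightarrow> bool" where
  "topologically_transitive_on S T \<longleftrightarrow>
     (\<forall>U V. openin (top_of_set S) U \<longrightarrow> openin (top_of_set S) V \<longrightarrow> U \<noteq> {} \<longrightarrow> V \<noteq> {} \<longrightarrow>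
       (\<exists>n. \<exists>x\<in>U. (T ^^ n) x \<in> V))"

lemma topologically_transitive_onD:
  assumes "topologically_transitive_on S T" "openin (top_of_set S) U" "openin (top_of_set S) V"
    "U \<noteq> {}" "V \<noteq> {}"
  shows "\<exists>n. \<exists>x\<in>U. (T ^^ n) x \<in> V"
  using assms unfolding topologically_transitive_on_def by blast

lemma openin_orbit_visits:
  assumes "continuous_on S T" "T ` S \<subseteq> S" "open C"
  shows "openin (top_of_set S) {x\<in>S. \<exists>n. (T ^^ n) x \<in> C}"
proof -
  have "openin (top_of_set S) (S \<inter> (T ^^ n) -` C)" for n
    using continuous_on_funpow[OF assms(1,2)] assms(3) by (rule continuous_openin_preimage_gen)
  moreover have "{x\<in>S. \<exists>n. (T ^^ n) x \<in> C} = (\<Union>n. S \<inter> (T ^^ n) -` C)"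
    by blast
  ultimately show ?thesis
    by (metis (no_types, lifting) imageE openin_Union)
qed

lemma dense_orbit_visits:
  fixes T :: "'a::metric_space \<Rightarrow> 'a"
  assumes "topologically_transitive_on S T" "open C" "C \<inter> S \<noteq> {}"
  shows "S \<subseteq> closure {x\<in>S. \<exists>n. (T ^^ n) x \<in> C}"
proof
  fix x assume "x \<in> S"
  have "\<exists>y\<in>{x\<in>S. \<exists>n. (T ^^ n) x \<in> C}. dist y x < \<epsilon>" if "\<epsilon> > 0" for \<epsilon>
  proof -
    have "openin (top_of_set S) (S \<inter> ball x \<epsilon>)" "openin (top_of_set S) (S \<inter> C)"
      using \<open>open C\<close> by (auto intro: openin_open_Int)
    moreover have "S \<inter> ball x \<epsilon> \<noteq> {}" "S \<inter> C \<noteq> {}"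
      using \<open>x \<in> S\<close> \<open>\<epsilon> > 0\<close> \<open>C \<inter> S \<noteq> {}\<close> by auto
    ultimately obtain n y where "y \<in> S \<inter> ball x \<epsilon>" "(T ^^ n) y \<in> S \<inter> C"
      using topologically_transitive_onD[OF assms(1)] by meson
    then show ?thesis
      by (auto simp: dist_commute)
  qed
  then show "x \<in> closure {x\<in>S. \<exists>n. (T ^^ n) x \<in> C}"
    by (simp add: closure_approachable)
qed

text \<open>Birkhoff's transitivity theorem: the points whose orbit visits a given basic open set form
  open dense subsets of \<open>S\<close>, and a point in all of them, which exists by Baire's theorem, has a
  dense orbit.\<close>

lemma dense_orbit_if_topologically_transitive:
  fixes T :: "'a::euclidean_space \<Rightarrow> 'a"
  assumes "closed S" "S \<noteq> {}" "continuous_on S T" "T ` S \<subseteq> S" "topologically_transitive_on S T"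
  shows "\<exists>\<xi>\<in>S. S \<subseteq> closure (range (\<lambda>n. (T ^^ n) \<xi>))"
proof -
  obtain \<B> :: "'a set set" where "countable \<B>" and \<B>_open: "\<And>C. C \<in> \<B> \<Longrightarrow> open C"
    and \<B>_basis: "\<And>W. open W \<Longrightarrow> \<exists>\<U>. \<U> \<subseteq> \<B> \<and> W = \<Union>\<U>"
    using univ_second_countable by blast
  define visits where "visits C = {x\<in>S. \<exists>n. (T ^^ n) x \<in> C}" for C
  define \<G> where "\<G> = visits ` {C\<in>\<B>. C \<inter> S \<noteq> {}}"
  have basic_nbhd: "\<exists>C\<in>\<B>. x \<in> C \<and> C \<subseteq> W" if "open W" "x \<in> W" for x W
    using \<B>_basis[OF \<open>open W\<close>] \<open>x \<in> W\<close> by blast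
  have "openin (top_of_set S) (visits C) \<and> S \<subseteq> closure (visits C)"
    if "C \<in> \<B>" "C \<inter> S \<noteq> {}" for C
    using openin_orbit_visits[OF assms(3,4) \<B>_open] dense_orbit_visits[OF assms(5) \<B>_open] that
    unfolding visits_def by blast
  then have "S \<subseteq> closure (\<Inter>\<G>)"
    using \<open>closed S\<close> \<open>countable \<B>\<close> unfolding \<G>_def by (intro Baire) auto
  then obtain \<xi> where "\<xi> \<in> \<Inter>\<G>"
    using \<open>S \<noteq> {}\<close> by (metis closure_empty empty_iff ex_in_conv subset_empty)
  obtain s where "s \<in> S"
    using \<open>S \<noteq> {}\<close> by blast
  then obtain C where "C \<in> \<B>" "s \<in> C"
    using basic_nbhd[of UNIV s] by auto
  then have "visits C \<in> \<G>"
    using \<open>s \<in> S\<close> unfolding \<G>_def by blast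
  with \<open>\<xi> \<in> \<Inter>\<G>\<close> have "\<xi> \<in> S"
    unfolding visits_def by blast
  moreover have "x \<in> closure (range (\<lambda>n. (T ^^ n) \<xi>))" if "x \<in> S" for x
    unfolding closure_approachable
  proof (intro allI impI)
    fix \<epsilon> :: real assume "\<epsilon> > 0"
    then obtain C where "C \<in> \<B>" "x \<in> C" "C \<subseteq> ball x \<epsilon>"
      using basic_nbhd[of "ball x \<epsilon>" x] by auto
    then have "\<xi> \<in> visits C"
      using \<open>\<xi> \<in> \<Inter>\<G>\<close> \<open>x \<in> S\<close> unfolding \<G>_def by blast
    then show "\<exists>y\<in>range (\<lambda>n. (T ^^ n) \<xi>). dist y x < \<epsilon>"
      using \<open>C \<subseteq> ball x \<epsilon>\<close> unfolding visits_def by (force simp: dist_commute)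
  qed
  ultimately show ?thesis
    by blast
qed

lemma emeasure_lborel_real_affine_vimage:
  fixes c t :: real
  assumes "c \<noteq> 0" "A \<in> sets borel"
  shows "emeasure lborel A = ennreal \<bar>c\<bar> * emeasure lborel ((\<lambda>x. t + c * x) -` A)"
  using assms
  by (subst (1) lborel_real_affine[OF assms(1), of t])
     (simp add: emeasure_density emeasure_distr nn_integral_cmult_indicator)

definition tent :: "real \<Rightarrow> real" where
  "tent x = min (2 * x) (2 - 2 * x)"

lemma continuous_on_tent: "continuous_on S tent"
  unfolding tent_def by (intro continuous_intros)

lemma tent_unit_interval: "tent ` {0..1} \<subseteq> {0..1}"
  by (auto simp: tent_def)

lemma generated_by_task_net_tent: "generated_by_task_net relu {0..1} tent"
proof -
  define Ls where "Ls = [[Neuron [[1]] [] [] 0, Neuron [[1]] [] [] (- 1/2)], [Neuron [[2, - 4]] [] [] 0]]"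
  have "hd (net_out relu Ls [x]) = relu (2 * relu x - 4 * relu (x - 1/2))" for x
    by (simp add: Ls_def net_out_def layer_out_def neuron_out_def lin_def)
  also have "\<dots> x = tent x" if "x \<in> {0..1}" for x
    using that by (auto simp: relu_def tent_def max_def min_def)
  finally show ?thesis
    unfolding generated_by_task_net_def by (intro exI[of _ Ls]) (simp add: Ls_def)
qed

lemma funpow_tent_dyadic_interval_onto:
  assumes "k < 2 ^ n" "y \<in> {0..1}"
  shows "\<exists>z\<in>{real k / 2 ^ n .. (real k + 1) / 2 ^ n}. (tent ^^ n) z = y"
  using assms(1)
proof (induction n arbitrary: k)
  case 0
  then show ?case
    using assms(2) by auto
next
  case (Suc n)
  have left_half: "\<exists>z\<in>{real k / 2 ^ Suc n .. (real k + 1) / 2 ^ Suc n}. (tent ^^ Suc n) z = y"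
    if k: "k < 2 ^ n" for k
  proof -
    obtain w where w: "real k / 2 ^ n \<le> w" "w \<le> (real k + 1) / 2 ^ n" "(tent ^^ n) w = y"
      using Suc.IH[OF k] by auto
    have "real k + 1 \<le> 2 ^ n"
      using k by (metis Suc_leI add.commute of_nat_Suc of_nat_le_numeral_power_cancel_iff)
    then have "(real k + 1) / 2 ^ n \<le> 1"
      by simp
    then have "w \<le> 1"
      using w(2) by linarith
    then have "tent (w / 2) = w"
      by (simp add: tent_def)
    then have "(tent ^^ Suc n) (w / 2) = y"
      using w(3) by (simp add: funpow_Suc_right del: funpow.simps)
    moreover have "w / 2 \<in> {real k / 2 ^ Suc n .. (real k + 1) / 2 ^ Suc n}"
      using w(1,2) by (simp add: divide_simps)
    ultimately show ?thesis
      by blast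
  qed
  show ?case
  proof (cases "k < 2 ^ n")
    case True
    then show ?thesis
      by (rule left_half)
  next
    case False
    \<comment> \<open>reflect through \<open>1/2\<close>, under which \<open>tent\<close> is symmetric\<close>
    define k' where "k' = 2 ^ Suc n - 1 - k"
    have k': "real k' = 2 ^ Suc n - 1 - real k"
      using Suc.prems unfolding k'_def by (simp add: of_nat_diff)
    have "k' < 2 ^ n"
      using False Suc.prems unfolding k'_def by simp
    then obtain z where z: "z \<in> {real k' / 2 ^ Suc n .. (real k' + 1) / 2 ^ Suc n}" "(tent ^^ Suc n) z = y"
      using left_half by blast
    have "tent (1 - z) = tent z"
      by (simp add: tent_def min.commute)
    then have "(tent ^^ Suc n) (1 - z) = y"
      using z(2) by (simp add: funpow_Suc_right del: funpow.simps)
    moreover have "1 - z \<in> {real k / 2 ^ Suc n .. (real k + 1) / 2 ^ Suc n}"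
      using z(1) k' by (simp add: divide_simps algebra_simps)
    ultimately show ?thesis
      by blast
  qed
qed

lemma dyadic_interval_within:
  fixes a b :: real
  assumes "0 \<le> a" "a < b" "b \<le> 1"
  obtains n k where "k < 2 ^ n" "a \<le> real k / 2 ^ n" "(real k + 1) / 2 ^ n \<le> b"
proof -
  obtain n where "2 / (b - a) < 2 ^ n"
    using real_arch_pow[of 2 "2 / (b - a)"] by auto
  then have width: "2 < (b - a) * 2 ^ n"
    using assms(2) by (simp add: divide_less_eq mult.commute)
  define k where "k = nat \<lceil>a * 2 ^ n\<rceil>"
  have "real k = \<lceil>a * 2 ^ n\<rceil>"
    using assms(1) unfolding k_def by simp
  then have k: "a * 2 ^ n \<le> real k" "real k < a * 2 ^ n + 1"
    by linarith+
  have "real k + 1 \<le> b * 2 ^ n"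
    using k(2) width by (simp add: algebra_simps)
  moreover have "b * 2 ^ n \<le> 2 ^ n"
    using assms(3) by simp
  ultimately have "real k < 2 ^ n"
    by linarith
  then have "k < 2 ^ n"
    by simp
  moreover have "a \<le> real k / 2 ^ n" "(real k + 1) / 2 ^ n \<le> b"
    using k(1) \<open>real k + 1 \<le> b * 2 ^ n\<close> by (simp_all add: divide_simps)
  ultimately show ?thesis
    using that by blast
qed

lemma tent_locally_eventually_onto:
  assumes "openin (top_of_set {0..1}) U" "U \<noteq> {}"
  shows "\<exists>n. {0..1} \<subseteq> (tent ^^ n) ` U"
proof -
  obtain x e where "x \<in> U" "e > 0" "ball x e \<inter> {0..1} \<subseteq> U"
    using assms by (meson ex_in_conv openin_contains_ball)
  define a where "a = max 0 (x - e / 2)"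
  define b where "b = min 1 (x + e / 2)"
  have "x \<in> {0..1}"
    using assms(1) \<open>x \<in> U\<close> openin_imp_subset by blast
  then have "0 \<le> a" "a < b" "b \<le> 1"
    using \<open>e > 0\<close> unfolding a_def b_def by auto
  then obtain n k where "k < 2 ^ n" and "{real k / 2 ^ n .. (real k + 1) / 2 ^ n} \<subseteq> U"
  proof (rule dyadic_interval_within)
    fix n k assume "k < 2 ^ n" "a \<le> real k / 2 ^ n" "(real k + 1) / 2 ^ n \<le> b"
    moreover have "{a..b} \<subseteq> ball x e \<inter> {0..1}"
      using \<open>e > 0\<close> unfolding a_def b_def by (auto simp: dist_real_def)
    then have "{a..b} \<subseteq> U"
      using \<open>ball x e \<inter> {0..1} \<subseteq> U\<close> by blast
    ultimately show thesis
      using that by (meson atLeastatMost_subset_iff order_trans)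
  qed
  then show ?thesis
    using funpow_tent_dyadic_interval_onto by blast
qed

lemma topologically_transitive_on_tent: "topologically_transitive_on {0..1} tent"
  unfolding topologically_transitive_on_def
proof (intro allI impI)
  fix U V :: "real set"
  assume U: "openin (top_of_set {0..1}) U" and V: "openin (top_of_set {0..1}) V"
    and "U \<noteq> {}" "V \<noteq> {}"
  obtain n where "{0..1} \<subseteq> (tent ^^ n) ` U"
    using tent_locally_eventually_onto[OF U \<open>U \<noteq> {}\<close>] by blast
  moreover obtain v where "v \<in> V"
    using \<open>V \<noteq> {}\<close> by blast
  moreover have "V \<subseteq> {0..1}"
    using V by (rule openin_imp_subset)
  ultimately show "\<exists>n. \<exists>x\<in>U. (tent ^^ n) x \<in> V"
    by blast
qed

lemma tent_vimage_unit_interval: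
  assumes "A \<subseteq> {0..1}"
  shows "tent -` A \<inter> {0..1} = (\<lambda>x. 2 * x) -` A \<union> (\<lambda>x. 2 - 2 * x) -` A"
proof (intro equalityI subsetI)
  fix x assume "x \<in> tent -` A \<inter> {0..1}"
  then show "x \<in> (\<lambda>x. 2 * x) -` A \<union> (\<lambda>x. 2 - 2 * x) -` A"
    by (cases "x \<le> 1/2") (auto simp: tent_def)
next
  fix x assume "x \<in> (\<lambda>x. 2 * x) -` A \<union> (\<lambda>x. 2 - 2 * x) -` A"
  then consider "2 * x \<in> {0..1}" "2 * x \<in> A" | "2 - 2 * x \<in> {0..1}" "2 - 2 * x \<in> A"
    using assms by force
  then show "x \<in> tent -` A \<inter> {0..1}"
    by cases (auto simp: tent_def)
qed

lemma emeasure_tent_vimage: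
  assumes "A \<subseteq> {0..1}" "A \<in> sets borel"
  shows "emeasure lborel (tent -` A \<inter> {0..1}) = emeasure lborel A"
proof -
  define left where "left = (\<lambda>x::real. 2 * x) -` A"
  define right where "right = (\<lambda>x::real. 2 - 2 * x) -` A"
  have sets: "left \<in> sets lborel" "right \<in> sets lborel"
    unfolding left_def right_def by (simp_all add: measurable_sets_borel[OF _ assms(2)])
  have "left \<inter> right \<subseteq> {1/2}"
  proof
    fix x assume "x \<in> left \<inter> right"
    then have "2 * x \<le> 1" "2 - 2 * x \<le> 1"
      using assms(1) unfolding left_def right_def by auto
    then show "x \<in> {1/2}"
      by simp
  qed
  then have null: "left \<inter> right \<in> null_sets lborel"
    using null_sets_subset[OF finite_imp_null_set_lborel[of "{1/2}"] sets.Int[OF sets]] by simp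
  have A_left: "emeasure lborel A = 2 * emeasure lborel left"
    using emeasure_lborel_real_affine_vimage[OF _ assms(2), of 2 0] unfolding left_def by simp
  moreover have "emeasure lborel A = 2 * emeasure lborel right"
    using emeasure_lborel_real_affine_vimage[OF _ assms(2), of "- 2" 2] unfolding right_def by simp
  ultimately have "emeasure lborel left = emeasure lborel right"
    using ennreal_mult_cancel_left[of 2 "emeasure lborel left" "emeasure lborel right"] by simp
  then have "emeasure lborel (left \<union> right) = emeasure lborel A"
    using emeasure_Un'[OF sets null] A_left by (simp add: mult_2)
  then show ?thesis
    using tent_vimage_unit_interval[OF assms(1)] unfolding left_def right_def by simp
qed

lemma measure_preserving_tent: "measure_preserving_on unit_leb tent"
  unfolding measure_preserving_on_def unit_leb_def
proof (intro conjI ballI)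
  have "tent \<in> borel_measurable borel"
    using continuous_on_tent by (rule borel_measurable_continuous_onI)
  then show "tent \<in> restrict_space lborel {0..1} \<rightarrow>\<^sub>M restrict_space lborel {0..1}"
    using tent_unit_interval by (intro measurable_restrict_space3) auto
next
  fix A assume "A \<in> sets (restrict_space lborel {0..1::real})"
  then have A: "A \<subseteq> {0..1}" "A \<in> sets borel"
    by (auto simp: sets_restrict_space_iff)
  have "emeasure (restrict_space lborel {0..1}) (tent -` A \<inter> space (restrict_space lborel {0..1}))
      = emeasure lborel (tent -` A \<inter> {0..1})"
    by (simp add: emeasure_restrict_space)
  also have "\<dots> = emeasure lborel A"
    using A by (rule emeasure_tent_vimage)
  also have "\<dots> = emeasure (restrict_space lborel {0..1}) A"
    using A(1) by (simp add: emeasure_restrict_space)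
  finally show "emeasure (restrict_space lborel {0..1}) (tent -` A \<inter> space (restrict_space lborel {0..1}))
      = emeasure (restrict_space lborel {0..1}) A" .
qed

theorem lemma1:
  shows "\<exists>(T :: real \<Rightarrow> real) (\<xi> :: real).
           measure_preserving_on unit_leb T \<and>
           generated_by_task_net relu {0..1} T \<and>
           \<xi> \<in> {0..1} \<and>
           (\<forall>x\<in>{0..1}. \<forall>\<epsilon>>0. \<exists>m::nat. \<bar>x - (T ^^ m) \<xi>\<bar> < \<epsilon>)"
proof -
  have "{0..1::real} \<noteq> {}"
    by simp
  then obtain \<xi> where "\<xi> \<in> {0..1}" and dense: "{0..1} \<subseteq> closure (range (\<lambda>n. (tent ^^ n) \<xi>))"
    using dense_orbit_if_topologically_transitive[OF closed_atLeastAtMost _ continuous_on_tent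
        tent_unit_interval topologically_transitive_on_tent]
    by blast
  have "\<forall>x\<in>{0..1}. \<forall>\<epsilon>>0. \<exists>m::nat. \<bar>x - (tent ^^ m) \<xi>\<bar> < \<epsilon>"
  proof (intro ballI allI impI)
    fix x :: real and \<epsilon> :: real
    assume "x \<in> {0..1}" "\<epsilon> > 0"
    then have "x \<in> closure (range (\<lambda>n. (tent ^^ n) \<xi>))"
      using dense by blast
    then obtain m where "dist ((tent ^^ m) \<xi>) x < \<epsilon>"
      using \<open>\<epsilon> > 0\<close> unfolding closure_approachable by blast
    then show "\<exists>m::nat. \<bar>x - (tent ^^ m) \<xi>\<bar> < \<epsilon>"
      by (metis dist_commute dist_real_def)
  qed
  then show ?thesis
    using measure_preserving_tent generated_by_task_net_tent \<open>\<xi> \<in> {0..1}\<close> by blast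
qed

end
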